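(* Let $\mathcal{X}$, $\mathcal{Y}$, $\mathcal{T}$ be finite sets, let $P_{XY}$ be a joint distribution on $\mathcal{X}\times\mathcal{Y}$, and let $P^\lambda_{T|X}$ be a stochastic mapping (conditional distribution) from $\mathcal{X}$ to $\mathcal{T}$, indexed by a hyperparameter $\lambda$. Let $I^\lambda(T;Y)$ denote the mutual information between $T$ and $Y$ under the joint distribution $P_{XY}(x,y)P^\lambda_{T|X}(t|x)$, and fix $\alpha \ge 0$. Let $\mathcal{D}_{\mathrm{MHT}} = \{(X_i,Y_i)\}_{i=1}^{n_{\mathrm{MHT}}}$ be drawn i.i.d. from $P_{XY}$, and for each $i$ let $T_i \sim P^\lambda_{T|X}(\cdot\mid X_i)$ independently. Let $\hat{I}^\lambda_{\mathcal{D}_{\mathrm{MHT}}}(T;Y)$ be the plug-in estimate $$\hat{I}^\lambda_{\mathcal{D}_{\mathrm{MHT}}}(T;Y)=\sum_{t\in\mathcal{T}}\sum_{y\in\mathcal{Y}}\hat{P}_{TY}(t,y)\log\frac{\hat{P}_{TY}(t,y)}{\hat{P}_T(t)\hat{P}_Y(y)},$$ where $\hat P_{TY}$ is the empirical joint distribution of $\{(T_i,Y_i)\}_{i=1}^{n_{\mathrm{MHT}}}$ and $\hat P_T,\hat P_Y$ are its marginals. For $\epsilon\in(0,1)$ define $$\theta(\epsilon,n_{\mathrm{MHT}})=\sqrt{\frac{2}{n_{\mathrm{MHT}}}\ln\!\left(\frac{2^{|\mathcal{T}||\mathcal{Y}|}-2}{\epsilon}\right)},$$ and $$\Delta I(\theta)=\begin{cases}\frac{\theta}{2}\log\big[(|\mathcal{T}||\mathcal{Y}|-1)(|\mathcal{T}|-1)(|\mathcal{Y}|-1)\big]+3h\!\left(\frac{\theta}{2}\right),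 & \text{if } \theta\le 2-\frac{2}{|\mathcal{T}|},\\ \log|\mathcal{T}|, & \text{if } \theta> 2-\frac{2}{|\mathcal{T}|},\end{cases}$$ with $h(x)=-x\log x-(1-x)\log(1-x)$. Define $$\hat{p}_\lambda=\inf\{\epsilon\in[0,1]:\ \hat{I}^\lambda_{\mathcal{D}_{\mathrm{MHT}}}(T;Y)-\Delta I(\theta(\epsilon,n_{\mathrm{MHT}}))\le\alpha\}.$$ Then $\hat p_\lambda$ is a valid $p$-value for the null hypothesis $\mathcal{H}_\lambda: I^\lambda(T;Y)<\alpha$, i.e., whenever $I^\lambda(T;Y)<\alpha$, we have $\Pr[\hat p_\lambda\le u]\le u$ for all $u\in[0,1]$, where the probability is over the draw of $\mathcal{D}_{\mathrm{MHT}}$ and of the $T_i$.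
   Context: All random variables take values in finite discrete alphabets. The same logarithm base is used in the plug-in estimator and in $\Delta I$ and $h$. *)

theory Defs
  imports "HOL-Probability.Probability"
begin

definition triple_pmf :: "('x \<times> 'y) pmf \<Rightarrow> ('x \<Rightarrow> 't pmf) \<Rightarrow> ('x \<times> 'y \<times> 't) pmf" where
  "triple_pmf P K = bind_pmf P (\<lambda>(x, y). map_pmf (\<lambda>t. (x, y, t)) (K x))"

definition sample_pmf :: "nat \<Rightarrow> ('x \<times> 'y) pmf \<Rightarrow> ('x \<Rightarrow> 't pmf) \<Rightarrow> (nat \<Rightarrow> 'x \<times> 'y \<times> 't) pmf" where
  "sample_pmf n P K = Pi_pmf {..<n} undefined (\<lambda>_. triple_pmf P K)"

definition mi_of :: "real \<Rightarrow> ('t::finite \<Rightarrow> 'y::finite \<Rightarrow> real) \<Rightarrow> real" where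
  "mi_of b Q = (\<Sum>t\<in>UNIV. \<Sum>y\<in>UNIV.
      if Q t y = 0 then 0
      else Q t y * log b (Q t y / ((\<Sum>y'\<in>UNIV. Q t y') * (\<Sum>t'\<in>UNIV. Q t' y))))"

definition true_MI :: "real \<Rightarrow> ('x::finite \<times> 'y::finite) pmf \<Rightarrow> ('x \<Rightarrow> 't::finite pmf) \<Rightarrow> real" where
  "true_MI b P K = mi_of b (\<lambda>t y. \<Sum>x\<in>UNIV. pmf P (x, y) * pmf (K x) t)"

definition emp_TY :: "nat \<Rightarrow> (nat \<Rightarrow> 'x \<times> 'y \<times> 't) \<Rightarrow> 't \<Rightarrow> 'y \<Rightarrow> real" where
  "emp_TY n \<omega> t y = real (card {i\<in>{..<n}. fst (snd (\<omega> i)) = y \<and> snd (snd (\<omega> i)) = t}) / real n"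

definition plugin_MI :: "real \<Rightarrow> nat \<Rightarrow> (nat \<Rightarrow> 'x \<times> 'y::finite \<times> 't::finite) \<Rightarrow> real" where
  "plugin_MI b n \<omega> = mi_of b (emp_TY n \<omega>)"

definition bin_ent :: "real \<Rightarrow> real \<Rightarrow> real" where
  "bin_ent b x = - x * log b x - (1 - x) * log b (1 - x)"

definition theta :: "'t::finite itself \<Rightarrow> 'y::finite itself \<Rightarrow> real \<Rightarrow> nat \<Rightarrow> real" where
  "theta _ _ \<epsilon> n =
     sqrt (2 / real n * ln ((2 ^ (CARD('t) * CARD('y)) - 2) / \<epsilon>))"

definition DeltaI :: "'t::finite itself \<Rightarrow> 'y::finite itself \<Rightarrow> real \<Rightarrow> real \<Rightarrow> real" where
  "DeltaI _ _ b \<theta> =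
     (if \<theta> \<le> 2 - 2 / real CARD('t)
      then \<theta> / 2 * log b (real ((CARD('t) * CARD('y) - 1) * (CARD('t) - 1) * (CARD('y) - 1)))
           + 3 * bin_ent b (\<theta> / 2)
      else log b (real CARD('t)))"

text \<open>p-value: infimum of the levels eps in (0,1] at which the test rejects
  (plug-in MI minus the deviation bound exceeds alpha); equals 1 if there is none.\<close>
definition pval :: "'t::finite itself \<Rightarrow> 'y::finite itself \<Rightarrow> real \<Rightarrow> real \<Rightarrow> nat \<Rightarrow>
                    (nat \<Rightarrow> 'x \<times> 'y \<times> 't) \<Rightarrow> real" where
  "pval TT YY b \<alpha> n \<omega> =
     Inf ({\<epsilon>\<in>{0<..1}. plugin_MI b n \<omega> - DeltaI TT YY b (theta TT YY \<epsilon> n) > \<alpha>} \<union> {1})"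

end

theory Submission
  imports Defs
begin

text \<open>
  Under the null hypothesis, rejection at level \<open>s\<close> means that the plug-in estimate exceeds
  the true mutual information by more than \<open>\<Delta>I(\<theta>(s))\<close>.  Writing mutual information as
  \<open>H(T) + H(Y) - H(T, Y)\<close> and bounding each entropy difference by \<open>x log (d - 1) + h(x)\<close>,
  where \<open>x\<close> is the total variation distance (maximal coupling plus Fano's inequality), such
  an excess forces the empirical law of \<open>(T, Y)\<close> to be more than \<open>\<theta>(s)/2\<close> away from the
  true one.  By Hoeffding's inequality and a union bound over the \<open>2^(|T||Y|) - 2\<close>
  nontrivial events this has probability at most \<open>s\<close>, which is how \<open>\<theta>\<close> is chosen.  Since
  \<open>\<theta>\<close> decreases in \<open>s\<close>, the p-value is at most \<open>u\<close> with probability at most any \<open>s > u\<close>.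
\<close>

definition prob_vector :: "('a::finite \<Rightarrow> real) \<Rightarrow> bool" where
  "prob_vector p \<longleftrightarrow> (\<forall>a. 0 \<le> p a) \<and> sum p UNIV = 1"

definition entropy_of :: "real \<Rightarrow> ('a::finite \<Rightarrow> real) \<Rightarrow> real" where
  "entropy_of b p = - (\<Sum>a\<in>UNIV. p a * log b (p a))"

definition marg_fst :: "('a \<times> 'b::finite \<Rightarrow> real) \<Rightarrow> 'a \<Rightarrow> real" where
  "marg_fst J a = (\<Sum>c\<in>UNIV. J (a, c))"

definition marg_snd :: "('a::finite \<times> 'b \<Rightarrow> real) \<Rightarrow> 'b \<Rightarrow> real" where
  "marg_snd J c = (\<Sum>a\<in>UNIV. J (a, c))"

lemma sum_UNIV_prod:
  fixes f :: "'a::finite \<times> 'b::finite \<Rightarrow> 'c::comm_monoid_add"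
  shows "(\<Sum>z\<in>UNIV. f z) = (\<Sum>a\<in>UNIV. \<Sum>c\<in>UNIV. f (a, c))"
  by (simp add: sum.cartesian_product UNIV_Times_UNIV[symmetric] del: UNIV_Times_UNIV)

lemma sum_marg_fst: "(\<Sum>z\<in>UNIV. J z * f (fst z)) = (\<Sum>a\<in>UNIV. marg_fst J a * f a)"
  for J :: "'a::finite \<times> 'b::finite \<Rightarrow> real"
  by (simp add: sum_UNIV_prod marg_fst_def sum_distrib_right)

lemma sum_marg_snd: "(\<Sum>z\<in>UNIV. J z * f (snd z)) = (\<Sum>c\<in>UNIV. marg_snd J c * f c)"
  for J :: "'a::finite \<times> 'b::finite \<Rightarrow> real"
  by (subst sum_UNIV_prod, subst sum.swap) (simp add: marg_snd_def sum_distrib_right)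

lemma prob_vector_pmf: "prob_vector (pmf D)" for D :: "'a::finite pmf"
  by (simp add: prob_vector_def sum_pmf_eq_1)

lemma prob_vector_nonneg: "prob_vector p \<Longrightarrow> 0 \<le> p a"
  by (simp add: prob_vector_def)

lemma prob_vector_sum: "prob_vector p \<Longrightarrow> sum p UNIV = 1"
  by (simp add: prob_vector_def)

lemma le_marg_fst: "(\<And>z. 0 \<le> J z) \<Longrightarrow> J (a, c) \<le> marg_fst J a"
  unfolding marg_fst_def by (rule member_le_sum[where f = "\<lambda>c. J (a, c)"]) auto

lemma le_marg_snd: "(\<And>z. 0 \<le> J z) \<Longrightarrow> J (a, c) \<le> marg_snd J c"
  unfolding marg_snd_def by (rule member_le_sum[where f = "\<lambda>a. J (a, c)"]) auto

lemma prob_vector_marg_fst: "prob_vector J \<Longrightarrow> prob_vector (marg_fst J)"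
  using sum_marg_fst[of J "\<lambda>_. 1"]
  by (simp add: prob_vector_def marg_fst_def sum_nonneg)

lemma prob_vector_marg_snd: "prob_vector J \<Longrightarrow> prob_vector (marg_snd J)"
  using sum_marg_snd[of J "\<lambda>_. 1"]
  by (simp add: prob_vector_def marg_snd_def sum_nonneg)

lemma gibbs_inequality:
  fixes p q :: "'a \<Rightarrow> real"
  assumes b: "b > 1" and "finite S"
    and p: "\<And>s. s \<in> S \<Longrightarrow> 0 \<le> p s" and q: "\<And>s. s \<in> S \<Longrightarrow> 0 \<le> q s"
    and pos: "\<And>s. s \<in> S \<Longrightarrow> 0 < p s \<Longrightarrow> 0 < q s"
    and sums: "sum q S \<le> sum p S"
  shows "(\<Sum>s\<in>S. p s * log b (q s)) \<le> (\<Sum>s\<in>S. p s * log b (p s))"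
proof -
  have lnb: "ln b > 0" using b by simp
  have "p s * log b (q s) - p s * log b (p s) \<le> (q s - p s) / ln b" if s: "s \<in> S" for s
  proof (cases "p s = 0")
    case True
    then show ?thesis using q[OF s] lnb by simp
  next
    case False
    then have ps: "p s > 0" using p[OF s] by simp
    have qs: "q s > 0" using pos[OF s ps] .
    have "p s * log b (q s) - p s * log b (p s) = p s * ln (q s / p s) / ln b"
      using ps qs by (simp add: log_def ln_div diff_divide_distrib right_diff_distrib)
    also have "\<dots> \<le> p s * (q s / p s - 1) / ln b"
      using ln_le_minus_one[of "q s / p s"] ps qs lnb
      by (intro divide_right_mono mult_left_mono) auto
    also have "\<dots> = (q s - p s) / ln b" using ps by (simp add: right_diff_distrib)
    finally show ?thesis .
  qed
  then have "(\<Sum>s\<in>S. p s * log b (q s) - p s * log b (p s)) \<le> (\<Sum>s\<in>S. (q s - p s) / ln b)"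
    by (rule sum_mono)
  also have "\<dots> = (sum q S - sum p S) / ln b"
    by (simp add: sum_divide_distrib[symmetric] sum_subtractf)
  also have "\<dots> \<le> 0" using sums lnb by (simp add: divide_nonpos_pos)
  finally show ?thesis by (simp add: sum_subtractf)
qed

lemma mult_log_mono: "b > 1 \<Longrightarrow> 0 \<le> x \<Longrightarrow> x \<le> y \<Longrightarrow> x * log b x \<le> x * log b y"
  by (cases "x = 0") (auto intro: mult_left_mono)

lemma entropy_le_log_card:
  fixes p :: "'a::finite \<Rightarrow> real"
  assumes b: "b > 1" and p: "prob_vector p"
  shows "entropy_of b p \<le> log b CARD('a)"
proof -
  have "(\<Sum>a\<in>UNIV. p a * log b (1 / CARD('a))) \<le> (\<Sum>a\<in>UNIV. p a * log b (p a))"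
    using p by (intro gibbs_inequality b) (auto simp: prob_vector_def)
  moreover have "(\<Sum>a\<in>UNIV. p a * log b (1 / CARD('a))) = sum p UNIV * log b (1 / CARD('a))"
    by (rule sum_distrib_right[symmetric])
  moreover have "\<dots> = - log b CARD('a)"
    using p by (simp add: prob_vector_sum log_divide)
  ultimately show ?thesis by (simp add: entropy_of_def)
qed

lemma entropy_marg_fst_le:
  assumes b: "b > 1" and J: "prob_vector J"
  shows "entropy_of b (marg_fst J) \<le> entropy_of b J"
proof -
  have "(\<Sum>z\<in>UNIV. J z * log b (J z)) \<le> (\<Sum>z\<in>UNIV. J z * log b (marg_fst J (fst z)))"
    using J le_marg_fst[of J] by (intro sum_mono mult_log_mono b) (auto simp: prob_vector_def)
  then show ?thesis
    using sum_marg_fst[of J "\<lambda>a. log b (marg_fst J a)"] by (simp add: entropy_of_def)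
qed

lemma entropy_marg_snd_le:
  assumes b: "b > 1" and J: "prob_vector J"
  shows "entropy_of b (marg_snd J) \<le> entropy_of b J"
proof -
  have "(\<Sum>z\<in>UNIV. J z * log b (J z)) \<le> (\<Sum>z\<in>UNIV. J z * log b (marg_snd J (snd z)))"
    using J le_marg_snd[of J] by (intro sum_mono mult_log_mono b) (auto simp: prob_vector_def)
  then show ?thesis
    using sum_marg_snd[of J "\<lambda>c. log b (marg_snd J c)"] by (simp add: entropy_of_def)
qed

lemma mi_of_eq_entropies:
  fixes J :: "'a::finite \<times> 'b::finite \<Rightarrow> real"
  assumes J_nonneg: "\<And>z. 0 \<le> J z"
  shows "mi_of b (curry J) = entropy_of b (marg_fst J) + entropy_of b (marg_snd J) - entropy_of b J"
proof -
  have summand: "(if J (a, c) = 0 then 0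
         else J (a, c) * log b (J (a, c) / ((\<Sum>c'\<in>UNIV. J (a, c')) * (\<Sum>a'\<in>UNIV. J (a', c)))))
      = J (a, c) * log b (J (a, c)) - J (a, c) * log b (marg_fst J a)
        - J (a, c) * log b (marg_snd J c)" for a c
  proof (cases "J (a, c) = 0")
    case False
    then have "0 < J (a, c)" using J_nonneg[of "(a, c)"] by simp
    moreover from this have "0 < marg_fst J a" "0 < marg_snd J c"
      using le_marg_fst[of J a c] le_marg_snd[of J a c] J_nonneg by auto
    ultimately show ?thesis
      by (simp add: log_divide log_mult algebra_simps flip: marg_fst_def marg_snd_def)
  qed simp
  have "mi_of b (curry J) = (\<Sum>z\<in>UNIV. J z * log b (J z))
      - (\<Sum>z\<in>UNIV. J z * log b (marg_fst J (fst z))) - (\<Sum>z\<in>UNIV. J z * log b (marg_snd J (snd z)))"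
    unfolding mi_of_def curry_conv summand by (simp add: sum_UNIV_prod sum_subtractf)
  then show ?thesis
    using sum_marg_fst[of J "\<lambda>a. log b (marg_fst J a)"] sum_marg_snd[of J "\<lambda>c. log b (marg_snd J c)"]
    by (simp add: entropy_of_def)
qed

lemma mi_of_nonneg:
  fixes J :: "'a::finite \<times> 'b::finite \<Rightarrow> real"
  assumes b: "b > 1" and J: "prob_vector J"
  shows "0 \<le> mi_of b (curry J)"
proof -
  define r where "r z = marg_fst J (fst z) * marg_snd J (snd z)" for z
  have J_nonneg: "0 \<le> J z" for z using J by (simp add: prob_vector_nonneg)
  have "(\<Sum>z\<in>UNIV. J z * log b (r z)) \<le> (\<Sum>z\<in>UNIV. J z * log b (J z))"
  proof (rule gibbs_inequality[OF b])
    show "0 \<le> r z" for z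
      using prob_vector_marg_fst[OF J] prob_vector_marg_snd[OF J] by (simp add: r_def prob_vector_nonneg)
    show "0 < r z" if "0 < J z" for z
      using that le_marg_fst[of J "fst z" "snd z"] le_marg_snd[of J "fst z" "snd z"] J_nonneg
      by (simp add: r_def)
    have "sum r UNIV = sum (marg_fst J) UNIV * sum (marg_snd J) UNIV"
      by (simp add: r_def sum_UNIV_prod sum_product)
    then show "sum r UNIV \<le> sum J UNIV"
      using prob_vector_marg_fst[OF J] prob_vector_marg_snd[OF J] J by (simp add: prob_vector_sum)
  qed (simp_all add: J_nonneg)
  moreover have "J z * log b (r z) = J z * log b (marg_fst J (fst z)) + J z * log b (marg_snd J (snd z))" for z
  proof (cases "J z = 0")
    case False
    then have "0 < J z" using J_nonneg[of z] by simp
    then have "0 < marg_fst J (fst z)" "0 < marg_snd J (snd z)"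
      using le_marg_fst[of J "fst z" "snd z"] le_marg_snd[of J "fst z" "snd z"] J_nonneg by simp_all
    then show ?thesis by (simp add: r_def log_mult distrib_left)
  qed simp
  ultimately show ?thesis
    using sum_marg_fst[of J "\<lambda>a. log b (marg_fst J a)"] sum_marg_snd[of J "\<lambda>c. log b (marg_snd J c)"]
    by (simp add: mi_of_eq_entropies J_nonneg entropy_of_def sum.distrib)
qed

lemma mi_of_le_log_card:
  fixes J :: "'a::finite \<times> 'b::finite \<Rightarrow> real"
  assumes b: "b > 1" and J: "prob_vector J"
  shows "mi_of b (curry J) \<le> log b CARD('a)" and "mi_of b (curry J) \<le> log b CARD('b)"
  using entropy_le_log_card[OF b prob_vector_marg_fst[OF J]] entropy_marg_snd_le[OF b J]
    entropy_le_log_card[OF b prob_vector_marg_snd[OF J]] entropy_marg_fst_le[OF b J]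
  by (simp_all add: mi_of_eq_entropies prob_vector_nonneg[OF J])

text \<open>For probability vectors this is half the \<open>L\<^sub>1\<close> distance, hence the factor 2
  relating it to \<open>\<theta>\<close> below.\<close>

definition tv_dist :: "('a::finite \<Rightarrow> real) \<Rightarrow> ('a \<Rightarrow> real) \<Rightarrow> real" where
  "tv_dist p q = (\<Sum>a\<in>UNIV. max 0 (p a - q a))"

lemma tv_dist_nonneg: "0 \<le> tv_dist p q"
  by (simp add: tv_dist_def sum_nonneg)

lemma tv_dist_commute:
  assumes "sum p UNIV = sum q UNIV"
  shows "tv_dist p q = tv_dist q p"
proof -
  have "tv_dist p q - tv_dist q p = (\<Sum>a\<in>UNIV. p a - q a)"
    by (simp add: tv_dist_def flip: sum_subtractf) (auto intro: sum.cong)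
  also have "\<dots> = 0" using assms by (simp add: sum_subtractf)
  finally show ?thesis by simp
qed

lemma max_0_sum_le: "max 0 (sum f A) \<le> (\<Sum>i\<in>A. max 0 (f i :: real))"
  by (simp add: sum_mono sum_nonneg)

lemma tv_dist_marg_fst_le: "tv_dist (marg_fst R) (marg_fst Q) \<le> tv_dist R Q"
proof -
  have "tv_dist (marg_fst R) (marg_fst Q) = (\<Sum>a\<in>UNIV. max 0 (\<Sum>c\<in>UNIV. R (a, c) - Q (a, c)))"
    by (simp add: tv_dist_def marg_fst_def sum_subtractf)
  also have "\<dots> \<le> (\<Sum>a\<in>UNIV. \<Sum>c\<in>UNIV. max 0 (R (a, c) - Q (a, c)))"
    by (intro sum_mono max_0_sum_le)
  finally show ?thesis by (simp add: tv_dist_def sum_UNIV_prod)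
qed

lemma tv_dist_marg_snd_le: "tv_dist (marg_snd R) (marg_snd Q) \<le> tv_dist R Q"
proof -
  have "tv_dist (marg_snd R) (marg_snd Q) = (\<Sum>c\<in>UNIV. max 0 (\<Sum>a\<in>UNIV. R (a, c) - Q (a, c)))"
    by (simp add: tv_dist_def marg_snd_def sum_subtractf)
  also have "\<dots> \<le> (\<Sum>c\<in>UNIV. \<Sum>a\<in>UNIV. max 0 (R (a, c) - Q (a, c)))"
    by (intro sum_mono max_0_sum_le)
  also have "\<dots> = tv_dist R Q"
    by (subst sum.swap) (simp add: tv_dist_def sum_UNIV_prod)
  finally show ?thesis .
qed

definition fano_bound :: "real \<Rightarrow> real \<Rightarrow> real \<Rightarrow> real" where
  "fano_bound b d x = x * log b (d - 1) + bin_ent b x"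

lemma bin_ent_nonneg:
  assumes b: "b > 1" and "0 \<le> x" "x \<le> 1"
  shows "0 \<le> bin_ent b x"
  using mult_log_mono[OF b, of x 1] mult_log_mono[OF b, of "1 - x" 1] assms
  by (simp add: bin_ent_def)

lemma log_of_nat_minus_1_nonneg: "b > 1 \<Longrightarrow> 0 \<le> log b (real N - 1)"
proof (cases "N \<ge> 2")
  case False
  then have "N = 0 \<or> N = 1" by auto
  then show ?thesis by (auto simp: log_def ln_minus)
qed simp

lemma fano_bound_nonneg: "b > 1 \<Longrightarrow> 0 \<le> x \<Longrightarrow> x \<le> 1 \<Longrightarrow> 0 \<le> fano_bound b (real N) x"
  using bin_ent_nonneg log_of_nat_minus_1_nonneg[of b N] by (simp add: fano_bound_def)

lemma fano_bound_at_uniform: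
  assumes b: "b > 1" and N: "1 \<le> N"
  shows "fano_bound b (real N) (1 - 1 / real N) = log b (real N)"
proof (cases "N = 1")
  case False
  then have N2: "real N \<ge> 2" using N by simp
  have "1 - 1 / real N = (real N - 1) / real N" using N2 by (simp add: field_simps)
  then have log_1: "log b (1 - 1 / real N) = log b (real N - 1) - log b (real N)"
    using N2 by (simp add: log_divide)
  have log_2: "log b (1 / real N) = - log b (real N)" using N2 by (simp add: log_divide)
  show ?thesis
    unfolding fano_bound_def bin_ent_def log_1 by (simp add: algebra_simps log_2)
qed (simp add: fano_bound_def bin_ent_def)

lemma fano_bound_mono:
  assumes b: "b > 1" and N: "1 \<le> N" and xy: "0 \<le> x" "x \<le> y" and y: "y \<le> 1 - 1 / real N"
  shows "fano_bound b (real N) x \<le> fano_bound b (real N) y"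
proof (cases "x = 0")
  case True
  have "0 < 1 / real N" using N by simp
  then have "y \<le> 1" using y by linarith
  then show ?thesis
    using True fano_bound_nonneg[OF b, of y N] xy y by (simp add: fano_bound_def bin_ent_def)
next
  case False
  then have x0: "0 < x" using xy by simp
  have "0 < 1 / real N" using N by simp
  then have y1: "y < 1" using y by linarith
  then have N2: "real N \<ge> 2" using x0 xy y N by (cases "N = 1") auto
  define c where "c = log b (real N - 1)"
  define f where "f z = z * c + (- z * log b z - (1 - z) * log b (1 - z))" for z
  have "f x \<le> f y"
  proof (rule DERIV_nonneg_imp_increasing_open[OF xy(2)])
    fix z assume z: "x < z" "z < y"
    then have z01: "0 < z" "z < 1" using x0 y1 by auto
    have "(f has_real_derivative (c - log b z + log b (1 - z))) (at z)"
      unfolding f_def using z01 b by (auto intro!: derivative_eq_intros)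
    moreover have "log b z \<le> c + log b (1 - z)"
    proof -
      have "z \<le> 1 - 1 / real N" using z y by linarith
      then have "z * real N \<le> real N - 1" using N2 by (simp add: field_simps)
      then have "z \<le> (real N - 1) * (1 - z)" by (simp add: algebra_simps)
      then have "log b z \<le> log b ((real N - 1) * (1 - z))" using z01 b N2 by simp
      then show ?thesis using z01 N2 by (simp add: c_def log_mult)
    qed
    ultimately show "\<exists>d. (f has_real_derivative d) (at z) \<and> 0 \<le> d" by auto
  next
    show "continuous_on {x..y} f"
      unfolding f_def using x0 y1 b by (intro continuous_intros) auto
  qed
  then show ?thesis by (simp add: f_def c_def fano_bound_def bin_ent_def)
qed

lemma fano_bound_mono_card:
  assumes b: "b > 1" and "0 \<le> x" and "1 \<le> M" "M \<le> N"
  shows "fano_bound b (real M) x \<le> fano_bound b (real N) x"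
proof -
  have "log b (real M - 1) \<le> log b (real N - 1)"
  proof (cases "M = 1")
    case True
    then show ?thesis using log_of_nat_minus_1_nonneg[OF b, of N] by (simp add: log_def)
  next
    case False
    then show ?thesis using assms by simp
  qed
  then show ?thesis using assms by (simp add: fano_bound_def mult_left_mono)
qed

text \<open>The coupling glues \<open>p\<close> and \<open>q\<close> along their common part \<open>min p q\<close> and
  distributes the remaining mass \<open>tv_dist p q\<close> as a product off the diagonal.\<close>

lemma maximal_coupling:
  fixes p q :: "'a::finite \<Rightarrow> real"
  assumes p: "prob_vector p" and q: "prob_vector q"
  obtains J where "prob_vector J" "marg_fst J = p" "marg_snd J = q"
    "(\<Sum>a\<in>UNIV. J (a, a)) = 1 - tv_dist p q"
proof -
  define m where "m a = min (p a) (q a)" for a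
  define e where "e = tv_dist p q"
  have p_m: "(\<Sum>a\<in>UNIV. p a - m a) = e"
    unfolding e_def tv_dist_def m_def by (intro sum.cong) auto
  moreover have "sum p UNIV = sum q UNIV" using p q by (simp add: prob_vector_sum)
  ultimately have q_m: "(\<Sum>a\<in>UNIV. q a - m a) = e" by (simp add: sum_subtractf)
  have p_m_le: "p a - m a \<le> e" for a
    unfolding p_m[symmetric] by (rule member_le_sum) (auto simp: m_def)
  have q_m_le: "q a - m a \<le> e" for a
    unfolding q_m[symmetric] by (rule member_le_sum) (auto simp: m_def)
  have cancel: "u * e / e = u" if "0 \<le> u" "u \<le> e" for u
    using that by (cases "e = 0") auto
  define J where
    "J z = (p (fst z) - m (fst z)) * (q (snd z) - m (snd z)) / e + (if fst z = snd z then m (fst z) else 0)"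
    for z
  have "marg_fst J a = (p a - m a) * (\<Sum>c\<in>UNIV. q c - m c) / e + m a" for a
    by (simp add: marg_fst_def J_def sum.distrib sum_distrib_left sum_divide_distrib[symmetric])
  also have "\<dots> a = p a" for a
    unfolding q_m using cancel[of "p a - m a"] p_m_le[of a] by (simp add: m_def)
  finally have fst: "marg_fst J = p" ..
  have "marg_snd J c = (\<Sum>a\<in>UNIV. p a - m a) * (q c - m c) / e + m c" for c
    by (simp add: marg_snd_def J_def sum.distrib sum_distrib_right sum_divide_distrib[symmetric])
  also have "\<dots> c = q c" for c
    unfolding p_m using cancel[of "q c - m c"] q_m_le[of c] by (simp add: m_def mult.commute)
  finally have snd: "marg_snd J = q" ..
  have "0 \<le> J z" for z
    using p q tv_dist_nonneg[of p q] by (auto simp: J_def m_def e_def prob_vector_nonneg)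
  moreover have "sum J UNIV = 1"
    using sum_marg_fst[of J "\<lambda>_. 1"] fst p by (simp add: prob_vector_sum)
  ultimately have "prob_vector J" by (simp add: prob_vector_def)
  moreover have "J (a, a) = m a" for a by (auto simp: J_def m_def min_def)
  then have "(\<Sum>a\<in>UNIV. J (a, a)) = 1 - tv_dist p q"
    using p_m p by (simp add: sum_subtractf prob_vector_sum e_def)
  ultimately show ?thesis using that fst snd by blast
qed

lemma sum_if_eq_else:
  "(\<Sum>a\<in>UNIV. if a = a' then u else v) = u + (real CARD('a) - 1) * v"
  for a' :: "'a::finite"
proof -
  have "(\<Sum>a\<in>UNIV. if a = a' then u else v) = (\<Sum>a\<in>UNIV. v + (if a = a' then u - v else 0))"
    by (intro sum.cong) auto
  then show ?thesis by (simp add: sum.distrib algebra_simps)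
qed

text \<open>The law of \<open>(X, X')\<close> with \<open>X' \<sim> q\<close> and \<open>X = X'\<close> with probability \<open>1 - e\<close>,
  \<open>X\<close> uniform on the other \<open>d - 1\<close> values otherwise: the reference law in Fano's inequality.\<close>

definition fano_ref :: "('a::finite \<Rightarrow> real) \<Rightarrow> real \<Rightarrow> 'a \<times> 'a \<Rightarrow> real" where
  "fano_ref q e z = q (snd z) * (if fst z = snd z then 1 - e else e / (real CARD('a) - 1))"

lemma fano_ref_nonneg:
  assumes "prob_vector q" "0 \<le> e" "e \<le> 1"
  shows "0 \<le> fano_ref q e z"
proof -
  have "1 \<le> real CARD('a)" by (simp add: Suc_le_eq)
  then show ?thesis using assms by (simp add: fano_ref_def prob_vector_nonneg)
qed

lemma sum_fano_ref_le:
  fixes q :: "'a::finite \<Rightarrow> real"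
  assumes q: "prob_vector q" and e: "0 \<le> e"
  shows "sum (fano_ref q e) UNIV \<le> 1"
proof -
  have row: "(\<Sum>a\<in>UNIV. if a = c then 1 - e else e / (real CARD('a) - 1)) \<le> 1" for c :: 'a
    using e by (cases "CARD('a) = 1") (simp_all add: sum_if_eq_else)
  have "sum (fano_ref q e) UNIV
      = (\<Sum>c\<in>UNIV. q c * (\<Sum>a\<in>UNIV. if a = c then 1 - e else e / (real CARD('a) - 1)))"
    unfolding fano_ref_def by (subst sum_UNIV_prod, subst sum.swap) (simp add: sum_distrib_left)
  also have "\<dots> \<le> (\<Sum>c\<in>UNIV. q c * 1)"
    using q by (intro sum_mono mult_left_mono row prob_vector_nonneg)
  finally show ?thesis using q by (simp add: prob_vector_sum)
qed

lemma entropy_le_fano: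
  fixes J :: "'a::finite \<times> 'a \<Rightarrow> real"
  assumes b: "b > 1" and J: "prob_vector J"
  shows "entropy_of b J
    \<le> entropy_of b (marg_snd J) + fano_bound b CARD('a) (1 - (\<Sum>a\<in>UNIV. J (a, a)))"
proof -
  define D where "D = {z :: 'a \<times> 'a. fst z = snd z}"
  define e where "e = sum J (- D)"
  define r where "r = fano_ref (marg_snd J) e"
  have J_nonneg: "0 \<le> J z" for z using J by (rule prob_vector_nonneg)
  have "sum J D = (\<Sum>a\<in>UNIV. J (a, a))"
    unfolding D_def by (rule sum.reindex_bij_witness[of _ "\<lambda>a. (a, a)" fst]) auto
  moreover have "sum J D + e = 1"
    using sum.Int_Diff[of UNIV J D] J by (simp add: e_def Compl_eq_Diff_UNIV prob_vector_sum)
  ultimately have e_eq: "1 - (\<Sum>a\<in>UNIV. J (a, a)) = e" and diag: "sum J D = 1 - e" by simp_all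
  have e_nonneg: "0 \<le> e" unfolding e_def using J_nonneg by (simp add: sum_nonneg)
  have e_le_1: "e \<le> 1" using diag J_nonneg sum_nonneg[of D J] by simp
  have support: "0 < marg_snd J (snd z)" "z \<in> D \<Longrightarrow> 0 < 1 - e"
    "z \<notin> D \<Longrightarrow> 0 < e \<and> 1 < real CARD('a)" if "0 < J z" for z
  proof -
    show "0 < marg_snd J (snd z)" using that le_marg_snd[of J "fst z" "snd z"] J_nonneg by simp
    show "0 < 1 - e" if "z \<in> D"
      using \<open>0 < J z\<close> member_le_sum[of z D J] that J_nonneg diag by simp
    assume "z \<notin> D"
    then have "card {fst z, snd z} = 2" by (simp add: D_def)
    moreover have "card {fst z, snd z} \<le> CARD('a)" by (rule card_mono) auto
    ultimately show "0 < e \<and> 1 < real CARD('a)"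
      using \<open>0 < J z\<close> member_le_sum[of z "- D" J] \<open>z \<notin> D\<close> J_nonneg by (simp add: e_def)
  qed
  have gibbs: "(\<Sum>z\<in>UNIV. J z * log b (r z)) \<le> (\<Sum>z\<in>UNIV. J z * log b (J z))"
  proof (rule gibbs_inequality[OF b])
    show "0 \<le> r z" for z
      unfolding r_def using prob_vector_marg_snd[OF J] e_nonneg e_le_1 by (rule fano_ref_nonneg)
    show "0 < r z" if "0 < J z" for z
      using support[OF that] by (cases "z \<in> D") (simp_all add: r_def fano_ref_def D_def)
    show "sum r UNIV \<le> sum J UNIV"
      using sum_fano_ref_le[OF prob_vector_marg_snd[OF J] e_nonneg] J by (simp add: r_def prob_vector_sum)
  qed (simp_all add: J_nonneg)
  have log_r: "log b (r z) = log b (marg_snd J (snd z))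
      + (if z \<in> D then log b (1 - e) else log b e - log b (real CARD('a) - 1))" if "0 < J z" for z
    using support[OF that] by (cases "z \<in> D") (simp_all add: r_def fano_ref_def D_def log_mult log_divide)
  have summand: "J z * log b (r z) = J z * log b (marg_snd J (snd z))
      + J z * (if z \<in> D then log b (1 - e) else log b e - log b (real CARD('a) - 1))" for z
  proof (cases "J z = 0")
    case False
    then have "0 < J z" using J_nonneg[of z] by simp
    then show ?thesis by (simp only: log_r distrib_left)
  qed simp
  have "(\<Sum>z\<in>UNIV. J z * (if z \<in> D then log b (1 - e) else log b e - log b (real CARD('a) - 1)))
      = sum J D * log b (1 - e) + sum J (- D) * (log b e - log b (real CARD('a) - 1))"
    by (simp add: if_distrib sum.If_cases sum_distrib_right)
  then have "(\<Sum>z\<in>UNIV. J z * log b (r z)) = - entropy_of b (marg_snd J)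
      + (1 - e) * log b (1 - e) + e * (log b e - log b (real CARD('a) - 1))"
    using sum_marg_snd[of J "\<lambda>c. log b (marg_snd J c)"]
    by (simp add: summand sum.distrib entropy_of_def diag flip: e_def)
  with gibbs show ?thesis
    unfolding e_eq by (simp add: entropy_of_def fano_bound_def bin_ent_def algebra_simps)
qed

lemma entropy_diff_le_fano_bound:
  fixes p q :: "'a::finite \<Rightarrow> real"
  assumes b: "b > 1" and p: "prob_vector p" and q: "prob_vector q"
    and x: "tv_dist p q \<le> x" "x \<le> 1 - 1 / CARD('a)"
  shows "entropy_of b p - entropy_of b q \<le> fano_bound b CARD('a) x"
proof -
  obtain J where J: "prob_vector J" "marg_fst J = p" "marg_snd J = q"
    "(\<Sum>a\<in>UNIV. J (a, a)) = 1 - tv_dist p q"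
    using maximal_coupling[OF p q] .
  have "entropy_of b p \<le> entropy_of b J"
    using entropy_marg_fst_le[OF b J(1)] J(2) by simp
  also have "\<dots> \<le> entropy_of b q + fano_bound b CARD('a) (tv_dist p q)"
    using entropy_le_fano[OF b J(1)] J(3,4) by simp
  also have "\<dots> \<le> entropy_of b q + fano_bound b CARD('a) x"
    using fano_bound_mono[OF b _ tv_dist_nonneg x] by (simp add: Suc_le_eq)
  finally show ?thesis by simp
qed

lemma mi_of_diff_le_fano_bounds:
  fixes R Q :: "'t::finite \<times> 'y::finite \<Rightarrow> real"
  assumes b: "b > 1" and R: "prob_vector R" and Q: "prob_vector Q"
    and x: "tv_dist R Q \<le> x" "x \<le> 1 - 1 / CARD('t)"
  shows "mi_of b (curry R) - mi_of b (curry Q)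
    \<le> fano_bound b CARD('t \<times> 'y) x + fano_bound b CARD('t) x + fano_bound b CARD('y) x"
proof -
  have x_nonneg: "0 \<le> x" using tv_dist_nonneg x(1) by (rule order_trans)
  have "0 < 1 / real CARD('t)" by simp
  then have x_le_1: "x \<le> 1" using x(2) by linarith
  have "1 / real CARD('t \<times> 'y) \<le> 1 / real CARD('t)"
    by (intro divide_left_mono) (simp_all add: Suc_le_eq)
  then have x_TY: "x \<le> 1 - 1 / CARD('t \<times> 'y)" using x(2) by linarith
  have fano_nonneg: "0 \<le> fano_bound b (real N) x" for N
    using fano_bound_nonneg[OF b x_nonneg x_le_1] .
  have T: "entropy_of b (marg_fst R) - entropy_of b (marg_fst Q) \<le> fano_bound b CARD('t) x"
    using tv_dist_marg_fst_le[of R Q] x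
    by (intro entropy_diff_le_fano_bound b prob_vector_marg_fst R Q) auto
  have TY: "entropy_of b Q - entropy_of b R \<le> fano_bound b CARD('t \<times> 'y) x"
    using tv_dist_commute[of R Q] R Q x(1) x_TY
    by (intro entropy_diff_le_fano_bound[OF b Q R]) (auto simp: prob_vector_sum)
  show ?thesis
  proof (cases "x \<le> 1 - 1 / CARD('y)")
    case True
    then have "entropy_of b (marg_snd R) - entropy_of b (marg_snd Q) \<le> fano_bound b CARD('y) x"
      using tv_dist_marg_snd_le[of R Q] x(1)
      by (intro entropy_diff_le_fano_bound b prob_vector_marg_snd R Q) auto
    then show ?thesis
      using T TY by (simp add: mi_of_eq_entropies prob_vector_nonneg R Q)
  next
    case False
    \<comment> \<open>The \<open>Y\<close>-term is beyond the monotone range of its bound; instead, the whole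
      difference is at most \<open>log |Y|\<close>, which the \<open>(T, Y)\<close>-term already pays for.\<close>
    have "mi_of b (curry R) - mi_of b (curry Q) \<le> log b CARD('y)"
      using mi_of_le_log_card(2)[OF b R] mi_of_nonneg[OF b Q] by linarith
    also have "\<dots> = fano_bound b CARD('y) (1 - 1 / CARD('y))"
      using fano_bound_at_uniform[OF b, of "CARD('y)"] by (simp add: Suc_le_eq)
    also have "\<dots> \<le> fano_bound b CARD('t \<times> 'y) (1 - 1 / CARD('y))"
      by (intro fano_bound_mono_card b) (simp_all add: Suc_le_eq)
    also have "\<dots> \<le> fano_bound b CARD('t \<times> 'y) x"
      using False x_TY by (intro fano_bound_mono b) (simp_all add: Suc_le_eq)
    finally show ?thesis
      using fano_nonneg[of "CARD('t)"] fano_nonneg[of "CARD('y)"] by linarith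
  qed
qed

lemma mi_of_diff_le_DeltaI:
  fixes R Q :: "'t::finite \<times> 'y::finite \<Rightarrow> real"
  assumes b: "b > 1" and R: "prob_vector R" and Q: "prob_vector Q"
    and \<theta>: "2 * tv_dist R Q \<le> \<theta>"
  shows "mi_of b (curry R) - mi_of b (curry Q) \<le> DeltaI TYPE('t) TYPE('y) b \<theta>"
proof (cases "\<theta> \<le> 2 - 2 / CARD('t)")
  case False
  then show ?thesis
    using mi_of_le_log_card(1)[OF b R] mi_of_nonneg[OF b Q] by (simp add: DeltaI_def)
next
  case True
  define T Y where "T = CARD('t)" and "Y = CARD('y)"
  have x: "tv_dist R Q \<le> \<theta> / 2" "\<theta> / 2 \<le> 1 - 1 / T" using \<theta> True by (simp_all add: T_def)
  show ?thesis
  proof (cases "2 \<le> T \<and> 2 \<le> Y")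
    case True
    moreover have "2 * 1 \<le> real T * real Y" using True by (intro mult_mono) auto
    ultimately have "log b (real ((T * Y - 1) * (T - 1) * (Y - 1)))
        = log b (real (T * Y) - 1) + log b (real T - 1) + log b (real Y - 1)"
      by (simp add: of_nat_diff log_mult)
    then show ?thesis
      using mi_of_diff_le_fano_bounds[OF b R Q x[unfolded T_def]] \<open>\<theta> \<le> 2 - 2 / CARD('t)\<close>
      by (simp add: DeltaI_def fano_bound_def T_def Y_def algebra_simps)
  next
    case False
    moreover have "0 < T" "0 < Y" unfolding T_def Y_def by simp_all
    ultimately have "T = 1 \<or> Y = 1" by linarith
    then have "mi_of b (curry R) \<le> 0" using mi_of_le_log_card[OF b R] by (auto simp: T_def Y_def)
    moreover have "0 < 1 / real T" using \<open>0 < T\<close> by simp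
    then have "0 \<le> bin_ent b (\<theta> / 2)"
      using tv_dist_nonneg[of R Q] x by (intro bin_ent_nonneg b) linarith+
    ultimately show ?thesis
      using mi_of_nonneg[OF b Q] \<open>T = 1 \<or> Y = 1\<close> \<open>\<theta> \<le> 2 - 2 / CARD('t)\<close>
      by (auto simp: DeltaI_def T_def Y_def log_def)
  qed
qed

definition empirical :: "nat \<Rightarrow> (nat \<Rightarrow> 'a) \<Rightarrow> 'a \<Rightarrow> real" where
  "empirical n \<omega> a = real (card {i\<in>{..<n}. \<omega> i = a}) / real n"

lemma sum_empirical:
  assumes "finite A"
  shows "sum (empirical n \<omega>) A = real (card {i\<in>{..<n}. \<omega> i \<in> A}) / real n"
proof -
  have "{i\<in>{..<n}. \<omega> i \<in> A} = (\<Union>a\<in>A. {i\<in>{..<n}. \<omega> i = a})" by auto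
  moreover have "card (\<Union>a\<in>A. {i\<in>{..<n}. \<omega> i = a}) = (\<Sum>a\<in>A. card {i\<in>{..<n}. \<omega> i = a})"
    using assms by (intro card_UN_disjoint) auto
  ultimately have "card {i\<in>{..<n}. \<omega> i \<in> A} = (\<Sum>a\<in>A. card {i\<in>{..<n}. \<omega> i = a})"
    by simp
  then show ?thesis by (simp add: empirical_def sum_divide_distrib)
qed

lemma prob_vector_empirical: "n > 0 \<Longrightarrow> prob_vector (empirical n \<omega>)"
  for \<omega> :: "nat \<Rightarrow> 'a::finite"
  using sum_empirical[of UNIV n \<omega>] by (simp add: prob_vector_def empirical_def)

lemma prob_empirical_freq_ge:
  fixes D :: "'a pmf"
  assumes n: "n > 0" and x: "0 \<le> x"
  shows "measure_pmf.prob (Pi_pmf {..<n} d (\<lambda>_. D))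
      {\<omega>. measure_pmf.prob D A + x \<le> real (card {i\<in>{..<n}. \<omega> i \<in> A}) / real n}
    \<le> exp (- 2 * real n * x\<^sup>2)"
proof -
  define p where "p = measure_pmf.prob D A"
  have p: "p \<in> {0..1}" by (simp add: p_def)
  have "map_pmf (\<lambda>z. z \<in> A) D = bernoulli_pmf p"
  proof (rule pmf_eqI)
    fix v :: bool
    have "measure_pmf.prob D (- A) = 1 - p"
      unfolding p_def using measure_pmf.prob_compl[of A D] by (simp add: Compl_eq_Diff_UNIV)
    then show "pmf (map_pmf (\<lambda>z. z \<in> A) D) v = pmf (bernoulli_pmf p) v"
      using p by (cases v) (simp_all add: pmf_map p_def vimage_def Compl_eq)
  qed
  moreover have "Pi_pmf {..<n} (d \<in> A) (\<lambda>_. map_pmf (\<lambda>z. z \<in> A) D)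
      = map_pmf (\<lambda>\<omega>. (\<lambda>z. z \<in> A) \<circ> \<omega>) (Pi_pmf {..<n} d (\<lambda>_. D))"
    by (rule Pi_pmf_map) auto
  ultimately have coins: "map_pmf (\<lambda>\<omega>. (\<lambda>z. z \<in> A) \<circ> \<omega>) (Pi_pmf {..<n} d (\<lambda>_. D))
      = Pi_pmf {..<n} (d \<in> A) (\<lambda>_. bernoulli_pmf p)"
    by simp
  have "binomial_pmf n p = map_pmf (\<lambda>f. card {i\<in>{..<n}. f i}) (Pi_pmf {..<n} (d \<in> A) (\<lambda>_. bernoulli_pmf p))"
    using p by (intro binomial_pmf_altdef') auto
  then have "measure_pmf.prob (Pi_pmf {..<n} d (\<lambda>_. D))
      {\<omega>. p + x \<le> real (card {i\<in>{..<n}. \<omega> i \<in> A}) / real n}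
      = measure_pmf.prob (binomial_pmf n p) {k. p + x \<le> real k / real n}"
    by (simp add: coins[symmetric] map_pmf_comp vimage_def)
  also have "\<dots> \<le> exp (- 2 * real n * x\<^sup>2)"
    using binomial_distribution.prob_ge'[of p n x] p n x by (simp add: binomial_distribution_def)
  finally show ?thesis by (simp add: p_def)
qed

lemma tv_dist_gt_imp_subset:
  fixes p q :: "'a::finite \<Rightarrow> real"
  assumes "sum p UNIV = sum q UNIV" and "0 \<le> x" "x < tv_dist p q"
  obtains A where "A \<noteq> {}" "A \<noteq> UNIV" "x < sum p A - sum q A"
proof -
  define A where "A = {a. q a < p a}"
  have "tv_dist p q = (\<Sum>a\<in>UNIV. if a \<in> A then p a - q a else 0)"
    unfolding tv_dist_def A_def by (intro sum.cong) auto
  also have "\<dots> = sum p A - sum q A" by (simp add: sum.If_cases sum_subtractf)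
  finally have tv: "tv_dist p q = sum p A - sum q A" .
  then have "A \<noteq> {}" "A \<noteq> UNIV" using assms by auto
  with tv assms that show ?thesis by simp
qed

text \<open>The bound of Weissman et al.: the event is covered by the \<open>2^|'a| - 2\<close> events that
  the empirical frequency of some nontrivial subset \<open>A\<close> overshoots its probability by \<open>x\<close>.\<close>

lemma prob_tv_dist_empirical_gt:
  fixes D :: "'a::finite pmf"
  assumes n: "n > 0" and x: "0 \<le> x"
  shows "measure_pmf.prob (Pi_pmf {..<n} d (\<lambda>_. D)) {\<omega>. x < tv_dist (empirical n \<omega>) (pmf D)}
    \<le> (2 ^ CARD('a) - 2) * exp (- 2 * real n * x\<^sup>2)"
proof -
  define S :: "'a set set" where "S = Pow UNIV - {{}, UNIV}"
  define E where "E A = {\<omega>. measure_pmf.prob D A + x \<le> real (card {i\<in>{..<n}. \<omega> i \<in> A}) / real n}"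
    for A
  have cover: "{\<omega>. x < tv_dist (empirical n \<omega>) (pmf D)} \<subseteq> (\<Union>A\<in>S. E A)"
  proof safe
    fix \<omega> assume "x < tv_dist (empirical n \<omega>) (pmf D)"
    then obtain A where "A \<noteq> {}" "A \<noteq> UNIV" "x < sum (empirical n \<omega>) A - sum (pmf D) A"
      using tv_dist_gt_imp_subset prob_vector_empirical[OF n] x
      by (metis prob_vector_pmf prob_vector_sum)
    then have "A \<in> S" "\<omega> \<in> E A"
      by (simp_all add: S_def E_def sum_empirical measure_measure_pmf_finite)
    then show "\<omega> \<in> (\<Union>A\<in>S. E A)" by blast
  qed
  have "card S = 2 ^ CARD('a) - 2"
    unfolding S_def by (subst card_Diff_subset) (auto simp: card_Pow)
  moreover have "(2::nat) ^ 1 \<le> 2 ^ CARD('a)" by (intro power_increasing) (simp_all add: Suc_le_eq)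
  ultimately have card_S: "real (card S) = 2 ^ CARD('a) - 2"
    by (simp add: of_nat_diff)
  from cover have "measure_pmf.prob (Pi_pmf {..<n} d (\<lambda>_. D)) {\<omega>. x < tv_dist (empirical n \<omega>) (pmf D)}
      \<le> measure_pmf.prob (Pi_pmf {..<n} d (\<lambda>_. D)) (\<Union>A\<in>S. E A)"
    by (intro measure_pmf.finite_measure_mono) auto
  also have "\<dots> \<le> (\<Sum>A\<in>S. measure_pmf.prob (Pi_pmf {..<n} d (\<lambda>_. D)) (E A))"
    by (intro measure_pmf.finite_measure_subadditive_finite) (auto simp: S_def)
  also have "\<dots> \<le> (\<Sum>A\<in>S. exp (- 2 * real n * x\<^sup>2))"
    unfolding E_def by (intro sum_mono prob_empirical_freq_ge n x)
  also have "\<dots> = (2 ^ CARD('a) - 2) * exp (- 2 * real n * x\<^sup>2)"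
    by (simp add: card_S)
  finally show ?thesis .
qed

definition proj_TY :: "'x \<times> 'y \<times> 't \<Rightarrow> 't \<times> 'y" where
  "proj_TY = (\<lambda>(x, y, t). (t, y))"

definition TY_pmf :: "('x \<times> 'y) pmf \<Rightarrow> ('x \<Rightarrow> 't pmf) \<Rightarrow> ('t \<times> 'y) pmf" where
  "TY_pmf P K = map_pmf proj_TY (triple_pmf P K)"

lemma pmf_TY_pmf:
  fixes P :: "('x::finite \<times> 'y::finite) pmf"
  shows "pmf (TY_pmf P K) (t, y) = (\<Sum>x\<in>UNIV. pmf P (x, y) * pmf (K x) t)"
proof -
  have TY: "TY_pmf P K = bind_pmf P (\<lambda>(x, y'). map_pmf (\<lambda>t. (t, y')) (K x))"
    unfolding TY_pmf_def triple_pmf_def map_bind_pmf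
    by (intro bind_pmf_cong refl) (auto simp: map_pmf_comp proj_TY_def)
  have summand: "pmf P (x, y') * pmf (map_pmf (\<lambda>t'. (t', y')) (K x)) (t, y)
      = (if y' = y then pmf P (x, y) * pmf (K x) t else 0)" for x y'
  proof -
    have "(\<lambda>t'. (t', y')) -` {(t, y)} = (if y' = y then {t} else {})" by auto
    then show ?thesis by (simp add: pmf_map measure_pmf_single)
  qed
  show ?thesis
    unfolding TY pmf_bind
    by (subst integral_measure_pmf[of UNIV]) (simp_all add: sum_UNIV_prod summand)
qed

lemma true_MI_eq: "true_MI b P K = mi_of b (curry (pmf (TY_pmf P K)))"
  unfolding true_MI_def by (rule arg_cong[where f = "mi_of b"]) (simp add: fun_eq_iff pmf_TY_pmf)

lemma plugin_MI_eq: "plugin_MI b n \<omega> = mi_of b (curry (empirical n (proj_TY \<circ> \<omega>)))"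
  unfolding plugin_MI_def
  by (rule arg_cong[where f = "mi_of b"])
    (simp add: fun_eq_iff emp_TY_def empirical_def proj_TY_def split_beta prod_eq_iff conj_commute)

lemma prob_tv_dist_sample_gt:
  fixes P :: "('x::finite \<times> 'y::finite) pmf" and K :: "'x \<Rightarrow> 't::finite pmf"
  assumes "n > 0" "0 \<le> x"
  shows "measure_pmf.prob (sample_pmf n P K)
      {\<omega>. x < tv_dist (empirical n (proj_TY \<circ> \<omega>)) (pmf (TY_pmf P K))}
    \<le> (2 ^ (CARD('t) * CARD('y)) - 2) * exp (- 2 * real n * x\<^sup>2)"
proof -
  have "Pi_pmf {..<n} (proj_TY (undefined :: 'x \<times> 'y \<times> 't)) (\<lambda>_. TY_pmf P K)
      = map_pmf (\<lambda>\<omega>. proj_TY \<circ> \<omega>) (sample_pmf n P K)"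
    unfolding sample_pmf_def TY_pmf_def by (rule Pi_pmf_map) auto
  then show ?thesis
    using prob_tv_dist_empirical_gt[OF assms, of "proj_TY (undefined :: 'x \<times> 'y \<times> 't)" "TY_pmf P K"]
    by (simp add: vimage_def)
qed

lemma two_pow_minus_two_nonneg: "1 \<le> k \<Longrightarrow> (0::real) \<le> 2 ^ k - 2"
  using power_increasing[of 1 k "2::real"] by simp

lemma ln_two_pow_minus_two_div_nonneg:
  fixes \<epsilon> :: real
  assumes "1 \<le> k" "0 < \<epsilon>" "\<epsilon> \<le> 1"
  shows "0 \<le> ln ((2 ^ k - 2) / \<epsilon>)"
proof (cases "k = 1")
  case False
  then have "(2::real) ^ 2 \<le> 2 ^ k" using assms by (intro power_increasing) auto
  then have "1 \<le> (2 ^ k - 2) / \<epsilon>" using assms by (simp add: field_simps)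
  then show ?thesis by simp
qed simp

lemma theta_nonneg:
  "0 < \<epsilon> \<Longrightarrow> \<epsilon> \<le> 1 \<Longrightarrow> 0 \<le> theta TYPE('t::finite) TYPE('y::finite) \<epsilon> n"
  using ln_two_pow_minus_two_div_nonneg[of "CARD('t) * CARD('y)" \<epsilon>]
  by (simp add: theta_def Suc_le_eq)

lemma theta_antimono:
  assumes "0 < s" "s \<le> \<epsilon>"
  shows "theta TYPE('t::finite) TYPE('y::finite) \<epsilon> n \<le> theta TYPE('t) TYPE('y) s n"
proof -
  define c :: real where "c = 2 ^ (CARD('t) * CARD('y)) - 2"
  have "0 \<le> c" unfolding c_def by (intro two_pow_minus_two_nonneg) (simp add: Suc_le_eq)
  then have "ln (c / \<epsilon>) \<le> ln (c / s)"
    using assms by (cases "c = 0") (simp_all add: divide_left_mono)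
  then show ?thesis
    unfolding theta_def c_def[symmetric] by (intro real_sqrt_le_mono mult_left_mono) simp_all
qed

lemma theta_tail_bound:
  assumes "n > 0" "0 < \<epsilon>" "\<epsilon> \<le> 1"
  shows "(2 ^ (CARD('t::finite) * CARD('y::finite)) - 2)
      * exp (- 2 * real n * (theta TYPE('t) TYPE('y) \<epsilon> n / 2)\<^sup>2) \<le> \<epsilon>"
proof -
  define c :: real where "c = 2 ^ (CARD('t) * CARD('y)) - 2"
  have "0 \<le> ln (c / \<epsilon>)"
    unfolding c_def using assms by (intro ln_two_pow_minus_two_div_nonneg) (simp_all add: Suc_le_eq)
  then have "(theta TYPE('t) TYPE('y) \<epsilon> n)\<^sup>2 = 2 / real n * ln (c / \<epsilon>)"
    by (simp add: theta_def c_def)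
  then have "- 2 * real n * (theta TYPE('t) TYPE('y) \<epsilon> n / 2)\<^sup>2 = - ln (c / \<epsilon>)"
    using assms by (simp add: field_simps)
  moreover have "0 \<le> c" unfolding c_def by (intro two_pow_minus_two_nonneg) (simp add: Suc_le_eq)
  then have "c * exp (- ln (c / \<epsilon>)) \<le> \<epsilon>"
    using assms by (cases "c = 0") (simp_all add: exp_minus ln_div exp_diff)
  ultimately show ?thesis by (simp add: c_def)
qed

lemma pval_le_imp_rejects:
  assumes "pval TT YY b \<alpha> n \<omega> \<le> u" "u < \<epsilon>" "\<epsilon> \<le> 1"
  obtains s where "0 < s" "s < \<epsilon>"
    "\<alpha> < plugin_MI b n \<omega> - DeltaI TT YY b (theta TT YY s n)"
proof -
  define S where "S = {s\<in>{0<..1}. plugin_MI b n \<omega> - DeltaI TT YY b (theta TT YY s n) > \<alpha>} \<union> {1}"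
  have "Inf S < \<epsilon>" using assms by (simp add: pval_def S_def)
  then obtain s where "s \<in> S" "s < \<epsilon>" using cInf_lessD[of S] by (auto simp: S_def)
  then show ?thesis using that assms(3) by (auto simp: S_def)
qed

lemma rejection_imp_tv_dist_gt:
  fixes P :: "('x::finite \<times> 'y::finite) pmf" and K :: "'x \<Rightarrow> 't::finite pmf"
    and \<omega> :: "nat \<Rightarrow> 'x \<times> 'y \<times> 't"
  assumes b: "b > 1" and n: "n > 0" and null: "true_MI b P K < \<alpha>"
    and rejects: "\<alpha> < plugin_MI b n \<omega> - DeltaI TYPE('t) TYPE('y) b \<theta>"
  shows "\<theta> < 2 * tv_dist (empirical n (proj_TY \<circ> \<omega>)) (pmf (TY_pmf P K))"
proof (rule ccontr)
  assume "\<not> ?thesis"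
  then have "mi_of b (curry (empirical n (proj_TY \<circ> \<omega>))) - mi_of b (curry (pmf (TY_pmf P K)))
      \<le> DeltaI TYPE('t) TYPE('y) b \<theta>"
    by (intro mi_of_diff_le_DeltaI b prob_vector_empirical n prob_vector_pmf) simp
  then show False using null rejects by (simp add: true_MI_eq plugin_MI_eq)
qed

lemma prob_pval_le_bound:
  fixes P :: "('x::finite \<times> 'y::finite) pmf" and K :: "'x \<Rightarrow> 't::finite pmf"
  assumes b: "b > 1" and n: "n > 0" and null: "true_MI b P K < \<alpha>"
    and u: "0 \<le> u" "u < \<epsilon>" and \<epsilon>: "\<epsilon> \<le> 1"
  shows "measure_pmf.prob (sample_pmf n P K) {\<omega>. pval TYPE('t) TYPE('y) b \<alpha> n \<omega> \<le> u} \<le> \<epsilon>"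
proof -
  let ?prob = "measure_pmf.prob (sample_pmf n P K)"
  let ?dev = "\<lambda>\<omega> :: nat \<Rightarrow> 'x \<times> 'y \<times> 't. tv_dist (empirical n (proj_TY \<circ> \<omega>)) (pmf (TY_pmf P K))"
  let ?\<theta> = "\<lambda>\<epsilon>. theta TYPE('t) TYPE('y) \<epsilon> n"
  have "{\<omega>. pval TYPE('t) TYPE('y) b \<alpha> n \<omega> \<le> u} \<subseteq> {\<omega>. ?\<theta> \<epsilon> / 2 < ?dev \<omega>}"
  proof safe
    fix \<omega> :: "nat \<Rightarrow> 'x \<times> 'y \<times> 't"
    assume "pval TYPE('t) TYPE('y) b \<alpha> n \<omega> \<le> u"
    then obtain s where s: "0 < s" "s < \<epsilon>"
      and rejects: "\<alpha> < plugin_MI b n \<omega> - DeltaI TYPE('t) TYPE('y) b (?\<theta> s)"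
      using pval_le_imp_rejects u(2) \<epsilon> by blast
    have "?\<theta> \<epsilon> \<le> ?\<theta> s" using s by (intro theta_antimono) simp_all
    also have "\<dots> < 2 * ?dev \<omega>" using rejection_imp_tv_dist_gt[OF b n null rejects] .
    finally show "?\<theta> \<epsilon> / 2 < ?dev \<omega>" by simp
  qed
  then have "?prob {\<omega>. pval TYPE('t) TYPE('y) b \<alpha> n \<omega> \<le> u} \<le> ?prob {\<omega>. ?\<theta> \<epsilon> / 2 < ?dev \<omega>}"
    by (intro measure_pmf.finite_measure_mono) simp_all
  also have "\<dots> \<le> (2 ^ (CARD('t) * CARD('y)) - 2) * exp (- 2 * real n * (?\<theta> \<epsilon> / 2)\<^sup>2)"
    using theta_nonneg[of \<epsilon> n] u \<epsilon> by (intro prob_tv_dist_sample_gt n) simp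
  also have "\<dots> \<le> \<epsilon>" using theta_tail_bound[OF n _ \<epsilon>] u by simp
  finally show ?thesis .
qed

theorem proposition1:
  fixes P :: "('x::finite \<times> 'y::finite) pmf"
    and K :: "'l \<Rightarrow> 'x \<Rightarrow> 't::finite pmf"
    and lam :: 'l
    and b \<alpha> u :: real
    and n :: nat
  assumes "b > 1"
    and "\<alpha> \<ge> 0"
    and "n > 0"
    and "true_MI b P (K lam) < \<alpha>"
    and "0 \<le> u" and "u \<le> 1"
  shows "measure_pmf.prob (sample_pmf n P (K lam))
           {\<omega>. pval TYPE('t) TYPE('y) b \<alpha> n \<omega> \<le> u} \<le> u"
proof (cases "u = 1")
  case False
  then show ?thesis
    using assms prob_pval_le_bound[OF assms(1,3,4,5)] dense_ge_bounded[of u 1] by simp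
qed simp

end
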